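(* Let $d\ge 1$ and $n\ge d+2$. Any linear automorphism ${\bf A}$ of $M_{d,n}$ is a linear automorphism of $M_{1,n}$.
   Context: Let $N=\binom n2$, coordinates of $\mathbb C^N$ indexed by edges $\{i,j\}$ of $K_n$. For a complex configuration ${\bf p}$ of $n$ points in $\mathbb C^d$, $m({\bf p})$ has coordinates $m_{ij}=\sum_{k=1}^d({\bf p}_i^k-{\bf p}_j^k)^2$ (no conjugation); $M_{d,n}\subset\mathbb C^N$ is the image of $m$ over all complex configurations in $\mathbb C^d$ (and $M_{1,n}$ the analogous image for configurations in $\mathbb C^1$). A linear automorphism of a variety $V\subset\mathbb C^N$ is a non-singular $N\times N$ complex matrix mapping $V$ bijectively onto itself. *)

theory Defs
  imports Main "HOL-Analysis.Analysis"
begin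

text \<open>Edges {i,j} of K_n, represented as ordered pairs (i,j) with i < j < n
  (points indexed 0..n-1).  Vectors of C^N, N = n choose 2, are functions on
  pairs that vanish outside the edge set.\<close>

definition edges :: "nat \<Rightarrow> (nat \<times> nat) set" where
  "edges n = {(i, j). i < j \<and> j < n}"

definition cvecs :: "nat \<Rightarrow> ((nat \<times> nat) \<Rightarrow> complex) set" where
  "cvecs n = {v. \<forall>e. e \<notin> edges n \<longrightarrow> v e = 0}"

text \<open>A configuration of n points in C^d: p i k is the k-th coordinate
  (k < d) of point i.  The squared-length map, without conjugation.\<close>

definition mmap :: "nat \<Rightarrow> nat \<Rightarrow> (nat \<Rightarrow> nat \<Rightarrow> complex) \<Rightarrow> ((nat \<times> nat) \<Rightarrow> complex)" where
  "mmap d n p = (\<lambda>(i, j). if (i, j) \<in> edges n then (\<Sum>k<d. (p i k - p j k)^2) else 0)"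

definition Mvar :: "nat \<Rightarrow> nat \<Rightarrow> ((nat \<times> nat) \<Rightarrow> complex) set" where
  "Mvar d n = range (mmap d n)"

definition matvec :: "nat \<Rightarrow> ((nat \<times> nat) \<Rightarrow> (nat \<times> nat) \<Rightarrow> complex)
    \<Rightarrow> ((nat \<times> nat) \<Rightarrow> complex) \<Rightarrow> ((nat \<times> nat) \<Rightarrow> complex)" where
  "matvec n A v = (\<lambda>e. if e \<in> edges n then (\<Sum>f\<in>edges n. A e f * v f) else 0)"

definition nonsingular :: "nat \<Rightarrow> ((nat \<times> nat) \<Rightarrow> (nat \<times> nat) \<Rightarrow> complex) \<Rightarrow> bool" where
  "nonsingular n A \<longleftrightarrow> (\<forall>v\<in>cvecs n. matvec n A v = (\<lambda>_. 0) \<longrightarrow> v = (\<lambda>_. 0))"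

definition linear_automorphism :: "nat \<Rightarrow> ((nat \<times> nat) \<Rightarrow> (nat \<times> nat) \<Rightarrow> complex)
    \<Rightarrow> ((nat \<times> nat) \<Rightarrow> complex) set \<Rightarrow> bool" where
  "linear_automorphism n A V \<longleftrightarrow> nonsingular n A \<and> bij_betw (matvec n A) V V"

end

theory Submission
  imports Defs
begin

text \<open>
  A point x of M_E lies in M_{E-1} exactly when the directions y for which the whole line
  x + t y stays in M_E span C^N (here n \<ge> E + 2 is used).  This criterion is preserved by every
  linear automorphism of M_E, so such an automorphism also preserves M_{E-1}; descending from
  d to 1 gives the theorem.

  If x = m(p) with p in C^{E-1} and y = m(q) with q in C^1, then x + t y = m(p, sqrt t * q),
  so every point of M_1 is such a direction, and M_1 spans C^N.  Conversely let x = m(p) with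
  p in C^E.
  If the coordinates of p are affinely dependent, p can be rewritten with E - 1 coordinates,
  because over C the form sum_k d_k^2 + (b.d)^2 is again a sum of E - 1 squares.  Otherwise the
  Gram form G_x(g, h) = -1/2 sum_ij x_ij g_i h_j on zero-sum weights has rank E, and
  n \<ge> E + 2 yields a nonzero w in its radical.  As G_{x+ty} has rank at most E for every t,
  a perturbation argument gives G_y(w, w) = 0 for every admissible direction y, hence for all
  y in C^N; but G(w, w) = -w_i w_j for the unit vector of the edge {i, j}, and w has two
  nonzero entries.
\<close>

section \<open>Linear algebra over the complex numbers\<close>

lemma homogeneous_system_nontrivial_solution:
  fixes M :: "'r \<Rightarrow> nat \<Rightarrow> complex"
  assumes "finite R" and "card R < m"
  shows "\<exists>z. (\<exists>i<m. z i \<noteq> 0) \<and> (\<forall>k\<in>R. (\<Sum>i<m. M k i * z i) = 0)"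
  using assms
proof (induction m arbitrary: R M)
  case 0
  then show ?case by simp
next
  case (Suc m)
  show ?case
  proof (cases "\<forall>k\<in>R. M k m = 0")
    case True
    define z where "z = (\<lambda>i. if i = m then 1 else (0::complex))"
    have "(\<Sum>i<Suc m. M k i * z i) = M k m" for k
      by (simp add: z_def)
    with True show ?thesis
      by (intro exI[of _ z]) (auto simp: z_def)
  next
    case False
    then obtain k0 where k0: "k0 \<in> R" "M k0 m \<noteq> 0" by blast
    define N where "N = (\<lambda>k i. M k i - M k m / M k0 m * M k0 i)"
    have "card (R - {k0}) < m"
      using Suc.prems k0(1) card_gt_0_iff[of R] by (auto simp: card_Diff_singleton)
    then obtain z' where nz: "\<exists>i<m. z' i \<noteq> 0"
      and sol: "\<forall>k\<in>R - {k0}. (\<Sum>i<m. N k i * z' i) = 0"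
      using Suc.IH[of "R - {k0}" N] Suc.prems(1) by auto
    define z where "z = (\<lambda>i. if i < m then z' i else - (\<Sum>j<m. M k0 j * z' j) / M k0 m)"
    have row: "(\<Sum>i<Suc m. M k i * z i)
        = (\<Sum>i<m. M k i * z' i) - M k m / M k0 m * (\<Sum>j<m. M k0 j * z' j)" for k
      by (simp add: z_def)
    have "(\<Sum>i<Suc m. M k i * z i) = 0" if "k \<in> R" for k
    proof (cases "k = k0")
      case True
      then show ?thesis
        unfolding row using k0(2) by simp
    next
      case False
      have "(\<Sum>i<Suc m. M k i * z i) = (\<Sum>i<m. N k i * z' i)"
        unfolding row N_def by (simp add: left_diff_distrib sum_subtractf sum_distrib_left mult.assoc)
      then show ?thesis
        using sol that False by simp
    qed
    moreover have "\<exists>i<Suc m. z i \<noteq> 0"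
      using nz by (auto simp: z_def)
    ultimately show ?thesis by blast
  qed
qed

definition lincomb ::
    "nat \<Rightarrow> (nat \<Rightarrow> nat \<Rightarrow> complex) \<Rightarrow> nat \<Rightarrow> (nat \<Rightarrow> complex) \<Rightarrow> complex" where
  "lincomb n p k g = (\<Sum>i<n. g i * p i k)"

definition zero_sum :: "nat \<Rightarrow> (nat \<Rightarrow> complex) set" where
  "zero_sum n = {g. (\<Sum>i<n. g i) = 0}"

lemma lincomb_sum:
  "lincomb n p k (\<lambda>i. \<Sum>j\<in>J. a j * v j i) = (\<Sum>j\<in>J. a j * lincomb n p k (v j))"
  unfolding lincomb_def
  by (simp add: sum_distrib_left sum_distrib_right sum.swap[of _ J] mult_ac)

lemma lincomb_linear:
  "lincomb n p k (\<lambda>i. a * g i + b * h i) = a * lincomb n p k g + b * lincomb n p k h"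
  unfolding lincomb_def by (simp add: sum.distrib sum_distrib_left algebra_simps)

lemma zero_sum_sum:
  "(\<And>j. j \<in> J \<Longrightarrow> v j \<in> zero_sum n) \<Longrightarrow> (\<lambda>i. \<Sum>j\<in>J. a j * v j i) \<in> zero_sum n"
  unfolding zero_sum_def by (simp add: sum.swap[of _ J] sum_distrib_left[symmetric])

lemma zero_sum_linear:
  "g \<in> zero_sum n \<Longrightarrow> h \<in> zero_sum n \<Longrightarrow> (\<lambda>i. a * g i + b * h i) \<in> zero_sum n"
  unfolding zero_sum_def by (simp add: sum.distrib sum_distrib_left[symmetric])

definition dual_basis ::
    "nat \<Rightarrow> (nat \<Rightarrow> nat \<Rightarrow> complex) \<Rightarrow> nat \<Rightarrow> (nat \<Rightarrow> nat \<Rightarrow> complex) \<Rightarrow> bool" where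
  "dual_basis n p E e \<longleftrightarrow> (\<forall>j<E. e j \<in> zero_sum n)
     \<and> (\<forall>k<E. \<forall>j<E. lincomb n p k (e j) = (if k = j then 1 else 0))"

lemma dual_basis_Suc:
  assumes e: "dual_basis n p E e" and u: "u \<in> zero_sum n"
    and u_dual: "\<forall>k<E. lincomb n p k u = 0" "lincomb n p E u = 1"
  shows "dual_basis n p (Suc E) (\<lambda>j. if j < E then (\<lambda>i. e j i - lincomb n p E (e j) * u i) else u)"
  using e u u_dual unfolding dual_basis_def zero_sum_def
  by (auto simp: less_Suc_eq lincomb_def left_diff_distrib sum_subtractf sum_distrib_left[symmetric]
      mult.assoc)

lemma dual_basis_extend:
  assumes e: "dual_basis n p E e" and g: "g \<in> zero_sum n"
    and nondep: "lincomb n p E g - (\<Sum>k<E. lincomb n p E (e k) * lincomb n p k g) \<noteq> 0"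
  shows "\<exists>e'. dual_basis n p (Suc E) e'"
proof -
  define \<gamma> where "\<gamma> = lincomb n p E g - (\<Sum>k<E. lincomb n p E (e k) * lincomb n p k g)"
  define u where "u = (\<lambda>i. (1 / \<gamma>) * g i + (- 1 / \<gamma>) * (\<Sum>k<E. lincomb n p k g * e k i))"
  have u: "u \<in> zero_sum n"
    unfolding u_def using g e by (intro zero_sum_linear zero_sum_sum) (auto simp: dual_basis_def)
  have u_dual: "lincomb n p j u = (if j < E then 0 else 1)" if "j \<le> E" for j
  proof -
    have u_j: "lincomb n p j u = (lincomb n p j g - (\<Sum>k<E. lincomb n p k g * lincomb n p j (e k))) / \<gamma>"
      unfolding u_def lincomb_linear lincomb_sum by (simp add: diff_divide_distrib)
    show ?thesis
    proof (cases "j < E")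
      case True
      then have "(\<Sum>k<E. lincomb n p k g * lincomb n p j (e k))
          = (\<Sum>k<E. if k = j then lincomb n p j g else 0)"
        using e unfolding dual_basis_def by (intro sum.cong) auto
      with True show ?thesis
        unfolding u_j by simp
    next
      case False
      with that have "j = E" by simp
      then have "lincomb n p j u = \<gamma> / \<gamma>"
        unfolding u_j \<gamma>_def by (simp add: mult.commute)
      with nondep \<open>\<not> j < E\<close> show ?thesis
        unfolding \<gamma>_def by simp
    qed
  qed
  have "dual_basis n p (Suc E) (\<lambda>j. if j < E then (\<lambda>i. e j i - lincomb n p E (e j) * u i) else u)"
    using u_dual by (intro dual_basis_Suc[OF e u]) auto
  then show ?thesis by blast
qed

lemma dependent_or_dual_basis:
  "(\<exists>c. (\<exists>k<E. c k \<noteq> 0) \<and> (\<forall>g\<in>zero_sum n. (\<Sum>k<E. c k * lincomb n p k g) = 0))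
   \<or> (\<exists>e. dual_basis n p E e)"
proof (induction E)
  case 0
  show ?case by (simp add: dual_basis_def)
next
  case (Suc E)
  show ?case
  proof (cases "\<exists>e. dual_basis n p E e")
    case False
    with Suc.IH obtain c where "\<exists>k<E. c k \<noteq> 0"
      and "\<forall>g\<in>zero_sum n. (\<Sum>k<E. c k * lincomb n p k g) = 0" by blast
    then show ?thesis
      by (intro disjI1 exI[of _ "\<lambda>k. if k < E then c k else 0"]) auto
  next
    case True
    then obtain e where e: "dual_basis n p E e" by blast
    define c where "c = (\<lambda>k. if k < E then - lincomb n p E (e k) else 1)"
    have c_sum: "(\<Sum>k<Suc E. c k * lincomb n p k g)
        = lincomb n p E g - (\<Sum>k<E. lincomb n p E (e k) * lincomb n p k g)" for g
      unfolding c_def by (simp add: sum_negf)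
    show ?thesis
    proof (cases "\<forall>g\<in>zero_sum n. (\<Sum>k<Suc E. c k * lincomb n p k g) = 0")
      case True
      moreover have "c E \<noteq> 0" by (simp add: c_def)
      ultimately show ?thesis by blast
    next
      case False
      then show ?thesis
        using dual_basis_extend[OF e] unfolding c_sum by blast
    qed
  qed
qed

lemma perturbed_kernel_vector_bound:
  fixes Y :: "nat \<Rightarrow> nat \<Rightarrow> complex" and a :: "nat \<Rightarrow> complex"
  assumes Y_le: "\<And>i j. i \<le> E \<Longrightarrow> j \<le> E \<Longrightarrow> norm (Y i j) \<le> C"
    and t: "t > 0"
    and rows: "\<forall>i\<le>E. (if i < E then a i else 0) + of_real t * (\<Sum>j\<le>E. Y i j * a j) = 0"
  shows "norm (Y E E) * (\<Sum>j\<le>E. norm (a j)) \<le> (norm (Y E E) + C) * C * t * E * (\<Sum>j\<le>E. norm (a j))"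
proof -
  define S where "S = (\<Sum>j<E. norm (a j))"
  define T where "T = (\<Sum>j\<le>E. norm (a j))"
  have C: "C \<ge> 0"
    using Y_le[of 0 0] norm_ge_zero[of "Y 0 0"] by linarith
  have row_le: "norm (\<Sum>j\<in>J. Y i j * a j) \<le> C * (\<Sum>j\<in>J. norm (a j))"
    if "i \<le> E" "J \<subseteq> {..E}" for i J
  proof -
    have "norm (\<Sum>j\<in>J. Y i j * a j) \<le> (\<Sum>j\<in>J. norm (Y i j) * norm (a j))"
      by (rule order_trans[OF norm_sum]) (simp add: norm_mult)
    also have "\<dots> \<le> (\<Sum>j\<in>J. C * norm (a j))"
      using that Y_le by (intro sum_mono mult_right_mono) auto
    finally show ?thesis
      by (simp add: sum_distrib_left)
  qed
  have "norm (a i) \<le> t * (C * T)" if "i < E" for i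
  proof -
    have "a i + of_real t * (\<Sum>j\<le>E. Y i j * a j) = 0"
      using rows[rule_format, of i] that by simp
    then have "a i = - of_real t * (\<Sum>j\<le>E. Y i j * a j)"
      by (simp add: eq_neg_iff_add_eq_0)
    then have "norm (a i) = t * norm (\<Sum>j\<le>E. Y i j * a j)"
      using t by (simp add: norm_mult)
    also have "\<dots> \<le> t * (C * T)"
      unfolding T_def using that t by (intro mult_left_mono row_le) auto
    finally show ?thesis .
  qed
  then have S_le: "S \<le> E * (t * (C * T))"
    unfolding S_def using sum_bounded_above[of "{..<E}" "\<lambda>j. norm (a j)"] by simp
  have "Y E E * a E = - (\<Sum>j<E. Y E j * a j)"
    using rows[rule_format, of E] t
    by (simp add: lessThan_Suc_atMost[symmetric] eq_neg_iff_add_eq_0 add.commute)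
  then have "norm (Y E E) * norm (a E) = norm (\<Sum>j<E. Y E j * a j)"
    by (metis norm_minus_cancel norm_mult)
  also have "\<dots> \<le> C * S"
    unfolding S_def by (intro row_le) auto
  finally have "norm (Y E E) * T \<le> (norm (Y E E) + C) * S"
    unfolding T_def S_def by (simp add: lessThan_Suc_atMost[symmetric] algebra_simps)
  also have "\<dots> \<le> (norm (Y E E) + C) * (E * (t * (C * T)))"
    using S_le C by (intro mult_left_mono) auto
  finally show ?thesis
    unfolding T_def by (simp add: ac_simps)
qed

text \<open>The hypothesis says that diag(1, ..., 1, 0) + t Y is singular for every t > 0.\<close>

lemma singular_perturbation_corner_zero:
  fixes Y :: "nat \<Rightarrow> nat \<Rightarrow> complex"
  assumes singular: "\<And>t::real. t > 0 \<Longrightarrow> \<exists>a. (\<exists>j\<le>E. a j \<noteq> 0)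
      \<and> (\<forall>i\<le>E. (if i < E then a i else 0) + of_real t * (\<Sum>j\<le>E. Y i j * a j) = 0)"
  shows "Y E E = 0"
proof (rule ccontr)
  assume "Y E E \<noteq> 0"
  define \<gamma> where "\<gamma> = norm (Y E E)"
  define C where "C = 1 + (\<Sum>i\<le>E. \<Sum>j\<le>E. norm (Y i j))"
  have \<gamma>: "\<gamma> > 0"
    using \<open>Y E E \<noteq> 0\<close> by (simp add: \<gamma>_def)
  have C: "C > 0"
    unfolding C_def by (simp add: add_pos_nonneg sum_nonneg)
  have Y_le: "norm (Y i j) \<le> C" if "i \<le> E" "j \<le> E" for i j
  proof -
    have "norm (Y i j) \<le> (\<Sum>j\<le>E. norm (Y i j))"
      using that by (intro member_le_sum) auto
    also have "\<dots> \<le> (\<Sum>i\<le>E. \<Sum>j\<le>E. norm (Y i j))"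
      using that by (intro member_le_sum[where f = "\<lambda>i. \<Sum>j\<le>E. norm (Y i j)"]) (auto intro: sum_nonneg)
    finally show ?thesis
      unfolding C_def by simp
  qed
  define t where "t = \<gamma> / ((\<gamma> + C) * C * (2 * (E + 1)))"
  have "t > 0"
    unfolding t_def using \<gamma> C by simp
  then obtain a where nonzero: "\<exists>j\<le>E. a j \<noteq> 0"
    and rows: "\<forall>i\<le>E. (if i < E then a i else 0) + of_real t * (\<Sum>j\<le>E. Y i j * a j) = 0"
    using singular by blast
  define T where "T = (\<Sum>j\<le>E. norm (a j))"
  have "T > 0"
  proof -
    obtain j where "j \<le> E" "a j \<noteq> 0"
      using nonzero by blast
    then have "0 < norm (a j)" "norm (a j) \<le> T"
      unfolding T_def by (auto intro: member_le_sum)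
    then show ?thesis by linarith
  qed
  have "\<gamma> * T \<le> (\<gamma> + C) * C * t * E * T"
    unfolding \<gamma>_def T_def using perturbed_kernel_vector_bound[OF Y_le \<open>t > 0\<close> rows] by simp
  also have "(\<gamma> + C) * C * t = \<gamma> / (2 * (E + 1))"
  proof -
    have "(\<gamma> + C) * C \<noteq> 0"
      using \<gamma> C by simp
    then show ?thesis
      unfolding t_def times_divide_eq_right by (rule mult_divide_mult_cancel_left)
  qed
  also have "\<gamma> / (2 * (E + 1)) * E * T \<le> \<gamma> * T * (1 / 2)"
    using \<gamma> \<open>T > 0\<close> by (simp add: field_simps)
  finally show False
    using \<gamma> \<open>T > 0\<close> by simp
qed

section \<open>The varieties M_E\<close>

lemma mmap_in_cvecs: "mmap d n p \<in> cvecs n"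
  unfolding mmap_def cvecs_def by auto

lemma Mvar_subset_cvecs: "Mvar d n \<subseteq> cvecs n"
  unfolding Mvar_def using mmap_in_cvecs by auto

lemma Mvar_mono:
  assumes "D \<le> E"
  shows "Mvar D n \<subseteq> Mvar E n"
proof
  fix x assume "x \<in> Mvar D n"
  then obtain p where x: "x = mmap D n p"
    unfolding Mvar_def by auto
  define p' where "p' = (\<lambda>i k. if k < D then p i k else 0)"
  have "(\<Sum>k<E. (p' i k - p' j k)^2) = (\<Sum>k<D. (p i k - p j k)^2)" for i j
    using assms by (subst sum.mono_neutral_right[of "{..<E}" "{..<D}"]) (auto simp: p'_def)
  then have "mmap E n p' = x"
    unfolding x mmap_def by (intro ext) (simp split: prod.split)
  then show "x \<in> Mvar E n"
    unfolding Mvar_def by blast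
qed

lemma mmap_permute_coords:
  assumes "\<pi> permutes {..<E}"
  shows "mmap E n (\<lambda>i k. p i (\<pi> k)) = mmap E n p"
proof -
  have "(\<Sum>k<E. (p i (\<pi> k) - p j (\<pi> k))^2) = (\<Sum>k<E. (p i k - p j k)^2)" for i j
    using sum.permute[OF assms, of "\<lambda>k. (p i k - p j k)^2"] by (simp add: comp_def)
  then show ?thesis
    unfolding mmap_def by (intro ext) (simp split: prod.split)
qed

lemma exists_root_quadratic: "\<exists>c::complex. \<beta> * c^2 + 2 * c = 1"
proof (cases "\<beta> = 0")
  case True
  then show ?thesis by (intro exI[of _ "1/2"]) simp
next
  case False
  define c where "c = (csqrt (1 + \<beta>) - 1) / \<beta>"
  have "\<beta> * c^2 + 2 * c = ((csqrt (1 + \<beta>))^2 - 1) / \<beta>"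
    unfolding c_def using False by (simp add: field_simps power2_eq_square)
  with False show ?thesis by auto
qed

lemma mmap_in_Mvar_if_last_coord_dependent:
  assumes last: "c r \<noteq> 0"
    and dep: "\<forall>g\<in>zero_sum n. (\<Sum>k<Suc r. c k * lincomb n p k g) = 0"
  shows "mmap (Suc r) n p \<in> Mvar r n"
proof -
  define b where "b = (\<lambda>k. - c k / c r)"
  obtain \<gamma> where \<gamma>: "(\<Sum>k<r. b k ^ 2) * \<gamma>^2 + 2 * \<gamma> = 1"
    using exists_root_quadratic by blast
  \<comment> \<open>by the choice of \<gamma>, sum_l d_l^2 + (b.d)^2 = sum_l ((I + \<gamma> b b^T) d)_l^2\<close>
  define q where "q = (\<lambda>i l. p i l + \<gamma> * b l * (\<Sum>k<r. b k * p i k))"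
  have "(\<Sum>k<Suc r. (p i k - p j k)^2) = (\<Sum>l<r. (q i l - q j l)^2)" if "i < n" "j < n" "i \<noteq> j" for i j
  proof -
    define d where "d = (\<lambda>k. p i k - p j k)"
    define s where "s = (\<Sum>k<r. b k * d k)"
    define g where "g = (\<lambda>a. (if a = i then 1 else 0) - (if a = j then 1 else (0::complex)))"
    have g: "g \<in> zero_sum n"
      unfolding zero_sum_def g_def using that by (simp add: sum_subtractf)
    have lincomb_g: "lincomb n p k g = d k" for k
      unfolding lincomb_def g_def d_def using that
      by (simp add: left_diff_distrib sum_subtractf if_distrib[where f = "\<lambda>x. x * _"] cong: if_cong)
    have "(\<Sum>k<Suc r. c k * d k) = 0"
      using dep[rule_format, OF g] by (simp only: lincomb_g)
    then have "d r = s"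
      using last unfolding s_def b_def
      by (simp add: sum_divide_distrib[symmetric] field_simps sum_negf eq_neg_iff_add_eq_0)
    have "q i l - q j l = d l + \<gamma> * b l * s" for l
      unfolding q_def d_def s_def by (simp add: algebra_simps sum_subtractf)
    then have "(q i l - q j l)^2 = d l ^ 2 + 2 * \<gamma> * s * (b l * d l) + \<gamma>^2 * s^2 * b l ^ 2" for l
      by (simp add: power2_eq_square algebra_simps)
    then have "(\<Sum>l<r. (q i l - q j l)^2)
        = (\<Sum>l<r. d l ^ 2) + 2 * \<gamma> * s * (\<Sum>l<r. b l * d l) + \<gamma>^2 * s^2 * (\<Sum>l<r. b l ^ 2)"
      by (simp add: sum.distrib sum_distrib_left)
    also have "\<dots> = (\<Sum>l<r. d l ^ 2) + s^2 * ((\<Sum>k<r. b k ^ 2) * \<gamma>^2 + 2 * \<gamma>)"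
      unfolding s_def[symmetric] by (simp add: power2_eq_square algebra_simps)
    also have "\<dots> = (\<Sum>l<r. d l ^ 2) + s^2"
      unfolding \<gamma> by simp
    also have "\<dots> = (\<Sum>k<Suc r. d k ^ 2)"
      using \<open>d r = s\<close> by simp
    finally show ?thesis
      unfolding d_def ..
  qed
  then have "mmap (Suc r) n p = mmap r n q"
    unfolding mmap_def edges_def by (intro ext) auto
  then show ?thesis
    unfolding Mvar_def by simp
qed

lemma mmap_in_Mvar_if_coords_dependent:
  assumes "k0 < Suc r" "c k0 \<noteq> 0"
    and dep: "\<forall>g\<in>zero_sum n. (\<Sum>k<Suc r. c k * lincomb n p k g) = 0"
  shows "mmap (Suc r) n p \<in> Mvar r n"
proof -
  define \<pi> where "\<pi> = Transposition.transpose k0 r"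
  have \<pi>: "\<pi> permutes {..<Suc r}"
    unfolding \<pi>_def using assms(1) by (intro permutes_swap_id) auto
  have "c (\<pi> r) \<noteq> 0"
    unfolding \<pi>_def using assms(2) by simp
  moreover have "\<forall>g\<in>zero_sum n. (\<Sum>k<Suc r. c (\<pi> k) * lincomb n (\<lambda>i k. p i (\<pi> k)) k g) = 0"
    using dep sum.permute[OF \<pi>, of "\<lambda>k. c k * lincomb n p k _"]
    by (simp add: lincomb_def comp_def)
  ultimately have "mmap (Suc r) n (\<lambda>i k. p i (\<pi> k)) \<in> Mvar r n"
    by (rule mmap_in_Mvar_if_last_coord_dependent)
  then show ?thesis
    unfolding mmap_permute_coords[OF \<pi>] .
qed

section \<open>Gram forms and complex spans\<close>

definition edge_entry :: "((nat \<times> nat) \<Rightarrow> complex) \<Rightarrow> nat \<Rightarrow> nat \<Rightarrow> complex" where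
  "edge_entry x i j = (if i < j then x (i, j) else if j < i then x (j, i) else 0)"

definition gram ::
    "nat \<Rightarrow> ((nat \<times> nat) \<Rightarrow> complex) \<Rightarrow> (nat \<Rightarrow> complex) \<Rightarrow> (nat \<Rightarrow> complex) \<Rightarrow> complex" where
  "gram n x g h = - (1/2) * (\<Sum>i<n. \<Sum>j<n. edge_entry x i j * g i * h j)"

lemma sum_sq_diff_zero_sum:
  fixes a g h :: "nat \<Rightarrow> complex"
  assumes "(\<Sum>i<n. g i) = 0" "(\<Sum>j<n. h j) = 0"
  shows "(\<Sum>i<n. \<Sum>j<n. (a i - a j)^2 * g i * h j) = - 2 * ((\<Sum>i<n. g i * a i) * (\<Sum>j<n. h j * a j))"
proof -
  have "(a i - a j)^2 * g i * h j
      = (a i^2 * g i) * h j + g i * (a j^2 * h j) - 2 * ((g i * a i) * (h j * a j))" for i j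
    by (simp add: power2_eq_square algebra_simps)
  then have "(\<Sum>i<n. \<Sum>j<n. (a i - a j)^2 * g i * h j)
      = (\<Sum>i<n. \<Sum>j<n. (a i^2 * g i) * h j) + (\<Sum>i<n. \<Sum>j<n. g i * (a j^2 * h j))
        - 2 * (\<Sum>i<n. \<Sum>j<n. (g i * a i) * (h j * a j))"
    by (simp add: sum.distrib sum_subtractf sum_distrib_left)
  also have "\<dots> = (\<Sum>i<n. a i^2 * g i) * (\<Sum>j<n. h j) + (\<Sum>i<n. g i) * (\<Sum>j<n. a j^2 * h j)
        - 2 * ((\<Sum>i<n. g i * a i) * (\<Sum>j<n. h j * a j))"
    by (simp only: sum_product)
  finally show ?thesis
    using assms by simp
qed

lemma gram_mmap:
  assumes "g \<in> zero_sum n" "h \<in> zero_sum n"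
  shows "gram n (mmap E n q) g h = (\<Sum>k<E. lincomb n q k g * lincomb n q k h)"
proof -
  have "edge_entry (mmap E n q) i j = (\<Sum>k<E. (q i k - q j k)^2)" if "i < n" "j < n" for i j
    using that unfolding edge_entry_def mmap_def edges_def by (auto simp: power2_commute)
  then have "(\<Sum>i<n. \<Sum>j<n. edge_entry (mmap E n q) i j * g i * h j)
      = (\<Sum>k<E. \<Sum>i<n. \<Sum>j<n. (q i k - q j k)^2 * g i * h j)"
    by (simp add: sum_distrib_right sum.swap[of _ "{..<E}"])
  also have "\<dots> = (\<Sum>k<E. - 2 * (lincomb n q k g * lincomb n q k h))"
    using assms unfolding zero_sum_def lincomb_def by (simp add: sum_sq_diff_zero_sum)
  finally show ?thesis
    unfolding gram_def by (simp add: sum_distrib_left)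
qed

lemma gram_add_scale: "gram n (\<lambda>e. x e + t * y e) g h = gram n x g h + t * gram n y g h"
proof -
  have "edge_entry (\<lambda>e. x e + t * y e) i j = edge_entry x i j + t * edge_entry y i j" for i j
    unfolding edge_entry_def by auto
  then show ?thesis
    unfolding gram_def by (simp add: distrib_right sum.distrib sum_distrib_left algebra_simps)
qed

lemma gram_zero: "gram n (\<lambda>_. 0) g h = 0"
proof -
  have "edge_entry (\<lambda>_. 0) i j = 0" for i j
    by (simp add: edge_entry_def)
  then show ?thesis
    by (simp add: gram_def)
qed

lemma gram_sum_left:
  "gram n y (\<lambda>i. \<Sum>j\<in>J. a j * v j i) h = (\<Sum>j\<in>J. a j * gram n y (v j) h)"
  unfolding gram_def
  by (simp add: sum_distrib_left sum_distrib_right sum.swap[of _ J] mult_ac)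

definition unit_edge :: "nat \<times> nat \<Rightarrow> (nat \<times> nat) \<Rightarrow> complex" where
  "unit_edge f = (\<lambda>e. if e = f then 1 else 0)"

lemma gram_unit_edge:
  assumes "i < j" "j < n"
  shows "gram n (unit_edge (i, j)) w w = - (w i * w j)"
proof -
  have "(\<Sum>b<n. edge_entry (unit_edge (i, j)) a b * w a * w b)
      = (if a = i then w i * w j else 0) + (if a = j then w i * w j else 0)" for a
  proof -
    have "(\<Sum>b<n. edge_entry (unit_edge (i, j)) a b * w a * w b)
        = (\<Sum>b<n. (if b = j then (if a = i then w i * w j else 0) else 0)
            + (if b = i then (if a = j then w i * w j else 0) else 0))"
      unfolding edge_entry_def unit_edge_def using assms by (intro sum.cong) auto
    then show ?thesis
      using assms by (simp add: sum.distrib)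
  qed
  then have "(\<Sum>a<n. \<Sum>b<n. edge_entry (unit_edge (i, j)) a b * w a * w b) = 2 * (w i * w j)"
    using assms by (simp add: sum.distrib)
  then show ?thesis
    unfolding gram_def by simp
qed

inductive_set cspan :: "((nat \<times> nat) \<Rightarrow> complex) set \<Rightarrow> ((nat \<times> nat) \<Rightarrow> complex) set"
  for S where
  zero: "(\<lambda>_. 0) \<in> cspan S"
| base: "y \<in> S \<Longrightarrow> y \<in> cspan S"
| add: "u \<in> cspan S \<Longrightarrow> v \<in> cspan S \<Longrightarrow> (\<lambda>e. u e + v e) \<in> cspan S"
| scale: "u \<in> cspan S \<Longrightarrow> (\<lambda>e. c * u e) \<in> cspan S"

lemma cspan_mono: "S \<subseteq> T \<Longrightarrow> cspan S \<subseteq> cspan T"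
proof
  fix u assume "S \<subseteq> T" "u \<in> cspan S"
  from \<open>u \<in> cspan S\<close> show "u \<in> cspan T"
    by induction (use \<open>S \<subseteq> T\<close> in \<open>auto intro: cspan.intros\<close>)
qed

lemma cspan_subset_cvecs: "S \<subseteq> cvecs n \<Longrightarrow> cspan S \<subseteq> cvecs n"
proof
  fix u assume "S \<subseteq> cvecs n" "u \<in> cspan S"
  from \<open>u \<in> cspan S\<close> show "u \<in> cvecs n"
    by induction (use \<open>S \<subseteq> cvecs n\<close> in \<open>auto simp: cvecs_def\<close>)
qed

lemma cspan_sum:
  "finite F \<Longrightarrow> (\<And>f. f \<in> F \<Longrightarrow> u f \<in> cspan S) \<Longrightarrow> (\<lambda>e. \<Sum>f\<in>F. c f * u f e) \<in> cspan S"
proof (induction F rule: finite_induct)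
  case empty
  then show ?case by (simp add: cspan.zero)
next
  case (insert f F)
  then show ?case
    by (simp add: cspan.add cspan.scale)
qed

lemma gram_cspan_vanishes:
  assumes "\<And>y. y \<in> S \<Longrightarrow> gram n y w w = 0" and "y \<in> cspan S"
  shows "gram n y w w = 0"
  using assms(2)
proof induction
  case zero
  then show ?case by (rule gram_zero)
next
  case (add u v)
  then show ?case using gram_add_scale[of n u 1 v] by simp
next
  case (scale u c)
  then show ?case using gram_add_scale[of n "\<lambda>_. 0" c u] by (simp add: gram_zero)
qed (use assms(1) in blast)

section \<open>Lines in M_E and the characterization of M_{E-1}\<close>

definition line_dirs ::
    "nat \<Rightarrow> nat \<Rightarrow> ((nat \<times> nat) \<Rightarrow> complex) \<Rightarrow> ((nat \<times> nat) \<Rightarrow> complex) set" where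
  "line_dirs E n x = {y. \<forall>t. (\<lambda>e. x e + t * y e) \<in> Mvar E n}"

lemma unit_edge_in_cspan_Mvar1:
  assumes "(i, j) \<in> edges n"
  shows "unit_edge (i, j) \<in> cspan (Mvar 1 n)"
proof -
  \<comment> \<open>m maps the indicator of a vertex set S to the indicator of the edges cut by S\<close>
  define m where "m = (\<lambda>S. mmap 1 n (\<lambda>a k. if a \<in> S then 1 else 0))"
  have "m S \<in> Mvar 1 n" for S
    unfolding m_def Mvar_def by simp
  then have "(\<lambda>e. (1/2) * m {i} e + (1/2) * m {j} e + (- 1/2) * m {i, j} e) \<in> cspan (Mvar 1 n)"
    by (intro cspan.add cspan.scale cspan.base)
  moreover have "(\<lambda>e. (1/2) * m {i} e + (1/2) * m {j} e + (- 1/2) * m {i, j} e) = unit_edge (i, j)"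
    using assms unfolding m_def mmap_def unit_edge_def edges_def
    by (intro ext) (auto simp: power2_eq_square split: prod.split)
  ultimately show ?thesis by simp
qed

lemma cvecs_subset_cspan_Mvar1: "cvecs n \<subseteq> cspan (Mvar 1 n)"
proof
  fix v assume v: "v \<in> cvecs n"
  have "finite (edges n)"
    by (rule finite_subset[of _ "{..<n} \<times> {..<n}"]) (auto simp: edges_def)
  then have "(\<lambda>e. \<Sum>f\<in>edges n. v f * unit_edge f e) \<in> cspan (Mvar 1 n)"
    using unit_edge_in_cspan_Mvar1 by (intro cspan_sum) auto
  moreover have "(\<lambda>e. \<Sum>f\<in>edges n. v f * unit_edge f e) = v"
    using v \<open>finite (edges n)\<close> unfolding cvecs_def unit_edge_def
    by (intro ext) (auto simp: if_distrib[of "\<lambda>x. _ * x"] cong: if_cong)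
  ultimately show "v \<in> cspan (Mvar 1 n)" by simp
qed

lemma Mvar1_subset_line_dirs:
  assumes x: "x \<in> Mvar r n"
  shows "Mvar 1 n \<subseteq> line_dirs (Suc r) n x"
proof
  fix y assume "y \<in> Mvar 1 n"
  then obtain q where y: "y = mmap 1 n q"
    unfolding Mvar_def by auto
  obtain p where x: "x = mmap r n p"
    using x unfolding Mvar_def by auto
  have "(\<lambda>e. x e + t * y e) \<in> Mvar (Suc r) n" for t
  proof -
    define p' where "p' = (\<lambda>i k. if k < r then p i k else csqrt t * q i 0)"
    have "(csqrt t * q i 0 - csqrt t * q j 0)^2 = t * (q i 0 - q j 0)^2" for i j
      by (simp add: power_mult_distrib flip: right_diff_distrib)
    then have "mmap (Suc r) n p' = (\<lambda>e. x e + t * y e)"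
      unfolding x y mmap_def p'_def by (intro ext) (simp split: prod.split)
    then show ?thesis
      unfolding Mvar_def by (metis rangeI)
  qed
  then show "y \<in> line_dirs (Suc r) n x"
    unfolding line_dirs_def by blast
qed

lemma gram_line_dir_perturbation_singular:
  assumes x: "x = mmap E n p"
    and v: "\<And>j. j \<le> E \<Longrightarrow> v j \<in> zero_sum n"
    and dual: "\<And>k j. k < E \<Longrightarrow> j \<le> E \<Longrightarrow> lincomb n p k (v j) = (if k = j then 1 else 0)"
    and y: "y \<in> line_dirs E n x"
  shows "\<exists>a. (\<exists>j\<le>E. a j \<noteq> 0) \<and> (\<forall>i\<le>E. (if i < E then a i else 0)
      + of_real t * (\<Sum>j\<le>E. gram n y (v j) (v i) * a j) = 0)"
proof -
  \<comment> \<open>on span v, gram x has matrix diag(1, ..., 1, 0), while gram (x + t y) has rank at most E\<close>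
  obtain q where q: "(\<lambda>e. x e + of_real t * y e) = mmap E n q"
    using y unfolding line_dirs_def Mvar_def by blast
  obtain a where nonzero: "\<exists>j<Suc E. a j \<noteq> 0"
    and kernel: "\<forall>k\<in>{..<E}. (\<Sum>j<Suc E. lincomb n q k (v j) * a j) = 0"
    using homogeneous_system_nontrivial_solution[of "{..<E}" "Suc E" "\<lambda>k j. lincomb n q k (v j)"]
    by auto
  define u where "u = (\<lambda>i. \<Sum>j\<le>E. a j * v j i)"
  have u: "u \<in> zero_sum n"
    unfolding u_def using v by (intro zero_sum_sum) simp
  have lincomb_q: "lincomb n q k u = 0" if "k < E" for k
    using kernel that unfolding u_def lincomb_sum
    by (simp add: mult.commute lessThan_Suc_atMost)
  have lincomb_p: "lincomb n p k u = a k" if "k < E" for k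
  proof -
    have "lincomb n p k u = (\<Sum>j\<le>E. if j = k then a k else 0)"
      unfolding u_def lincomb_sum using dual that by (intro sum.cong) auto
    then show ?thesis
      using that by simp
  qed
  have "(if i < E then a i else 0) + of_real t * (\<Sum>j\<le>E. gram n y (v j) (v i) * a j) = 0"
    if "i \<le> E" for i
  proof -
    have "gram n x u (v i) = (\<Sum>k<E. if k = i then a i else 0)"
      unfolding x gram_mmap[OF u v[OF that]] using lincomb_p dual that by (intro sum.cong) auto
    moreover have "gram n y u (v i) = (\<Sum>j\<le>E. gram n y (v j) (v i) * a j)"
      unfolding u_def gram_sum_left by (simp add: mult.commute)
    moreover have "gram n (\<lambda>e. x e + of_real t * y e) u (v i) = 0"
      unfolding q gram_mmap[OF u v[OF that]] using lincomb_q by simp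
    ultimately show ?thesis
      unfolding gram_add_scale by simp
  qed
  moreover have "\<exists>j\<le>E. a j \<noteq> 0"
    using nonzero by (auto simp: less_Suc_eq_le)
  ultimately show ?thesis
    by blast
qed

lemma gram_vanishes_on_line_dirs:
  assumes "x = mmap E n p"
    and "\<And>j. j \<le> E \<Longrightarrow> v j \<in> zero_sum n"
    and "\<And>k j. k < E \<Longrightarrow> j \<le> E \<Longrightarrow> lincomb n p k (v j) = (if k = j then 1 else 0)"
    and "y \<in> line_dirs E n x"
  shows "gram n y (v E) (v E) = 0"
  using singular_perturbation_corner_zero[where Y = "\<lambda>i j. gram n y (v j) (v i)"]
    gram_line_dir_perturbation_singular[OF assms]
  by simp

lemma zero_sum_annihilator_exists:
  assumes "Suc E < n"
  shows "\<exists>w\<in>zero_sum n. (\<exists>i<n. w i \<noteq> 0) \<and> (\<forall>k<E. lincomb n p k w = 0)"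
proof -
  define M where "M = (\<lambda>k i. if k = 0 then 1 else p i (k - 1))"
  obtain w where nonzero: "\<exists>i<n. w i \<noteq> 0"
    and kernel: "\<forall>k\<in>{..<Suc E}. (\<Sum>i<n. M k i * w i) = 0"
    using homogeneous_system_nontrivial_solution[of "{..<Suc E}" n M] assms by auto
  have "w \<in> zero_sum n"
    using kernel[rule_format, of 0] unfolding M_def zero_sum_def by simp
  moreover have "lincomb n p k w = 0" if "k < E" for k
    using kernel[rule_format, of "Suc k"] that unfolding M_def lincomb_def by (simp add: mult.commute)
  ultimately show ?thesis
    using nonzero by blast
qed

lemma zero_sum_second_nonzero:
  assumes "w \<in> zero_sum n" "i < n" "w i \<noteq> 0"
  shows "\<exists>j<n. j \<noteq> i \<and> w j \<noteq> 0"
proof (rule ccontr)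
  assume "\<not> ?thesis"
  then have "(\<Sum>j<n. w j) = (\<Sum>j<n. if j = i then w i else 0)"
    by (intro sum.cong) auto
  with assms show False
    unfolding zero_sum_def by simp
qed

lemma zero_sum_eq_zero_if_gram_vanishes:
  assumes w: "w \<in> zero_sum n" and gram_w: "\<And>y. y \<in> cvecs n \<Longrightarrow> gram n y w w = 0"
    and "i < n"
  shows "w i = 0"
proof (rule ccontr)
  assume "w i \<noteq> 0"
  then obtain j where j: "j < n" "j \<noteq> i" "w j \<noteq> 0"
    using zero_sum_second_nonzero[OF w \<open>i < n\<close>] by blast
  have edge: "min i j < max i j" "max i j < n"
    using \<open>i < n\<close> j by auto
  then have "gram n (unit_edge (min i j, max i j)) w w = 0"
    by (intro gram_w) (auto simp: cvecs_def unit_edge_def edges_def)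
  moreover have "w (min i j) * w (max i j) \<noteq> 0"
    using \<open>w i \<noteq> 0\<close> j by (simp add: min_def max_def)
  ultimately show False
    using gram_unit_edge[OF edge] by simp
qed

lemma mem_Mvar_if_line_dirs_span:
  assumes n: "Suc r + 2 \<le> n" and x: "x = mmap (Suc r) n p"
    and span: "cvecs n \<subseteq> cspan (line_dirs (Suc r) n x)"
  shows "x \<in> Mvar r n"
  using dependent_or_dual_basis[of "Suc r" n p]
proof
  assume "\<exists>c. (\<exists>k<Suc r. c k \<noteq> 0) \<and> (\<forall>g\<in>zero_sum n. (\<Sum>k<Suc r. c k * lincomb n p k g) = 0)"
  then show ?thesis
    unfolding x using mmap_in_Mvar_if_coords_dependent by blast
next
  assume "\<exists>e. dual_basis n p (Suc r) e"
  then obtain e where e: "dual_basis n p (Suc r) e" ..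
  obtain w where w: "w \<in> zero_sum n" and nonzero: "\<exists>i<n. w i \<noteq> 0"
    and w_dual: "\<forall>k<Suc r. lincomb n p k w = 0"
    using zero_sum_annihilator_exists[of "Suc r" n p] n by auto
  define v where "v = (\<lambda>j. if j < Suc r then e j else w)"
  have "gram n y w w = 0" if "y \<in> line_dirs (Suc r) n x" for y
    using gram_vanishes_on_line_dirs[OF x _ _ that, of v] e w w_dual
    unfolding v_def dual_basis_def by (auto simp: le_less)
  then have "gram n y w w = 0" if "y \<in> cvecs n" for y
    using gram_cspan_vanishes span that by blast
  with w nonzero show ?thesis
    using zero_sum_eq_zero_if_gram_vanishes by blast
qed

lemma mem_Mvar_iff_line_dirs_span:
  assumes "Suc r + 2 \<le> n" and "x \<in> Mvar (Suc r) n"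
  shows "x \<in> Mvar r n \<longleftrightarrow> cvecs n \<subseteq> cspan (line_dirs (Suc r) n x)"
proof
  assume "x \<in> Mvar r n"
  then have "cspan (Mvar 1 n) \<subseteq> cspan (line_dirs (Suc r) n x)"
    by (intro cspan_mono Mvar1_subset_line_dirs)
  with cvecs_subset_cspan_Mvar1 show "cvecs n \<subseteq> cspan (line_dirs (Suc r) n x)"
    by blast
next
  assume span: "cvecs n \<subseteq> cspan (line_dirs (Suc r) n x)"
  obtain p where "x = mmap (Suc r) n p"
    using assms(2) unfolding Mvar_def by blast
  from assms(1) this span show "x \<in> Mvar r n"
    by (rule mem_Mvar_if_line_dirs_span)
qed

section \<open>Linear automorphisms\<close>

lemma matvec_in_cvecs: "matvec n A v \<in> cvecs n"
  unfolding matvec_def cvecs_def by auto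

lemma matvec_add_scale: "matvec n A (\<lambda>e. u e + c * v e) = (\<lambda>e. matvec n A u e + c * matvec n A v e)"
  unfolding matvec_def by (auto simp: algebra_simps sum.distrib sum_distrib_left)

lemma matvec_zero: "matvec n A (\<lambda>_. 0) = (\<lambda>_. 0)"
  unfolding matvec_def by auto

lemma matvec_image_cspan: "matvec n A ` cspan S = cspan (matvec n A ` S)"
proof
  show "matvec n A ` cspan S \<subseteq> cspan (matvec n A ` S)"
  proof clarify
    fix u assume "u \<in> cspan S"
    then show "matvec n A u \<in> cspan (matvec n A ` S)"
    proof induction
      case zero
      then show ?case by (simp add: matvec_zero cspan.zero)
    next
      case (add u v)
      then show ?case using matvec_add_scale[of n A u 1 v] by (simp add: cspan.add)
    next
      case (scale u c)
      then show ?case using matvec_add_scale[of n A "\<lambda>_. 0" c u] by (simp add: matvec_zero cspan.scale)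
    qed (simp add: cspan.base)
  qed
  show "cspan (matvec n A ` S) \<subseteq> matvec n A ` cspan S"
  proof
    fix u assume "u \<in> cspan (matvec n A ` S)"
    then show "u \<in> matvec n A ` cspan S"
    proof induction
      case zero
      show ?case using matvec_zero cspan.zero by (metis image_eqI)
    next
      case (add u v)
      then obtain u' v' where "u' \<in> cspan S" "v' \<in> cspan S" "u = matvec n A u'" "v = matvec n A v'"
        by blast
      then show ?case
        using matvec_add_scale[of n A u' 1 v']
        by (intro image_eqI[of _ _ "\<lambda>e. u' e + v' e"]) (auto intro: cspan.add)
    next
      case (scale u c)
      then obtain u' where "u' \<in> cspan S" "u = matvec n A u'"
        by blast
      then show ?case
        using matvec_add_scale[of n A "\<lambda>_. 0" c u']
        by (intro image_eqI[of _ _ "\<lambda>e. c * u' e"]) (auto simp: matvec_zero intro: cspan.scale)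
    qed (auto intro: cspan.base)
  qed
qed

lemma nonsingular_inj_on_cvecs:
  assumes "nonsingular n A"
  shows "inj_on (matvec n A) (cvecs n)"
proof (rule inj_onI)
  fix u v assume u: "u \<in> cvecs n" and v: "v \<in> cvecs n" and eq: "matvec n A u = matvec n A v"
  have "(\<lambda>e. u e + (- 1) * v e) \<in> cvecs n"
    using u v unfolding cvecs_def by auto
  moreover have "matvec n A (\<lambda>e. u e + (- 1) * v e) = (\<lambda>_. 0)"
    unfolding matvec_add_scale eq by simp
  ultimately have "(\<lambda>e. u e + (- 1) * v e) = (\<lambda>_. 0)"
    using assms unfolding nonsingular_def by blast
  then show "u = v"
    by (auto simp: fun_eq_iff dest: fun_cong)
qed

lemma linear_automorphism_bij_cvecs:
  assumes A: "linear_automorphism n A (Mvar E n)" and "1 \<le> E"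
  shows "bij_betw (matvec n A) (cvecs n) (cvecs n)"
proof (rule bij_betw_imageI)
  show "inj_on (matvec n A) (cvecs n)"
    using A unfolding linear_automorphism_def by (simp add: nonsingular_inj_on_cvecs)
  have "cvecs n \<subseteq> cspan (Mvar E n)"
    using cvecs_subset_cspan_Mvar1 cspan_mono[OF Mvar_mono[OF \<open>1 \<le> E\<close>]] by blast
  also have "\<dots> = cspan (matvec n A ` Mvar E n)"
    using A unfolding linear_automorphism_def bij_betw_def by simp
  also have "\<dots> = matvec n A ` cspan (Mvar E n)"
    by (rule matvec_image_cspan[symmetric])
  also have "\<dots> \<subseteq> matvec n A ` cvecs n"
    using cspan_subset_cvecs[OF Mvar_subset_cvecs] by blast
  finally show "matvec n A ` cvecs n = cvecs n"
    using matvec_in_cvecs by blast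
qed

lemma line_dirs_subset_cvecs:
  assumes "x \<in> cvecs n"
  shows "line_dirs E n x \<subseteq> cvecs n"
proof
  fix y assume "y \<in> line_dirs E n x"
  then have "(\<lambda>e. x e + 1 * y e) \<in> cvecs n"
    unfolding line_dirs_def using Mvar_subset_cvecs by blast
  with assms show "y \<in> cvecs n"
    unfolding cvecs_def by auto
qed

lemma matvec_image_line_dirs:
  assumes A: "linear_automorphism n A (Mvar E n)" and "1 \<le> E" and x: "x \<in> cvecs n"
  shows "matvec n A ` line_dirs E n x = line_dirs E n (matvec n A x)"
proof -
  let ?f = "matvec n A"
  have V: "?f ` Mvar E n = Mvar E n"
    using A unfolding linear_automorphism_def bij_betw_def by simp
  have bij: "bij_betw ?f (cvecs n) (cvecs n)"
    using linear_automorphism_bij_cvecs[OF A \<open>1 \<le> E\<close>] .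
  have "?f y \<in> line_dirs E n (?f x) \<longleftrightarrow> y \<in> line_dirs E n x" if y: "y \<in> cvecs n" for y
  proof -
    have "(\<lambda>e. x e + t * y e) \<in> cvecs n" for t
      using x y unfolding cvecs_def by auto
    then have "?f (\<lambda>e. x e + t * y e) \<in> ?f ` Mvar E n \<longleftrightarrow> (\<lambda>e. x e + t * y e) \<in> Mvar E n" for t
      using inj_on_image_mem_iff[OF bij_betw_imp_inj_on[OF bij] _ Mvar_subset_cvecs] by blast
    then show ?thesis
      unfolding line_dirs_def matvec_add_scale V by simp
  qed
  moreover have "line_dirs E n (?f x) \<subseteq> ?f ` cvecs n"
    using line_dirs_subset_cvecs[OF matvec_in_cvecs] bij unfolding bij_betw_def by simp
  ultimately show ?thesis
    using line_dirs_subset_cvecs[OF x] by blast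
qed

lemma bij_betw_covered_by_image_iff:
  assumes "bij_betw f C C" and "S \<subseteq> C"
  shows "C \<subseteq> f ` S \<longleftrightarrow> C \<subseteq> S"
proof
  assume "C \<subseteq> f ` S"
  show "C \<subseteq> S"
  proof
    fix c assume "c \<in> C"
    then have "f c \<in> f ` S"
      using assms(1) \<open>C \<subseteq> f ` S\<close> unfolding bij_betw_def by blast
    with \<open>c \<in> C\<close> assms show "c \<in> S"
      unfolding bij_betw_def by (blast dest: inj_onD)
  qed
next
  assume "C \<subseteq> S"
  with assms(1) show "C \<subseteq> f ` S"
    unfolding bij_betw_def by blast
qed

lemma bij_betw_restrict_invariant:
  assumes bij: "bij_betw f V V" and invariant: "\<And>x. x \<in> V \<Longrightarrow> P (f x) \<longleftrightarrow> P x"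
  shows "bij_betw f {x \<in> V. P x} {x \<in> V. P x}"
proof (rule bij_betw_subset[OF bij])
  show "f ` {x \<in> V. P x} = {x \<in> V. P x}"
  proof
    show "f ` {x \<in> V. P x} \<subseteq> {x \<in> V. P x}"
      using bij invariant unfolding bij_betw_def by auto
    show "{x \<in> V. P x} \<subseteq> f ` {x \<in> V. P x}"
    proof clarify
      fix x assume "x \<in> V" "P x"
      then obtain z where "z \<in> V" "x = f z"
        using bij unfolding bij_betw_def by blast
      with invariant \<open>P x\<close> show "x \<in> f ` {x \<in> V. P x}"
        by blast
    qed
  qed
qed blast

lemma linear_automorphism_Mvar_down:
  assumes A: "linear_automorphism n A (Mvar (Suc r) n)" and n: "Suc r + 2 \<le> n"
  shows "linear_automorphism n A (Mvar r n)"
proof -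
  let ?f = "matvec n A" and ?V = "Mvar (Suc r) n"
  define spanning where "spanning x \<longleftrightarrow> cvecs n \<subseteq> cspan (line_dirs (Suc r) n x)" for x
  have "spanning (?f x) \<longleftrightarrow> spanning x" if "x \<in> ?V" for x
  proof -
    have x: "x \<in> cvecs n"
      using that Mvar_subset_cvecs by blast
    have "cspan (line_dirs (Suc r) n (?f x)) = ?f ` cspan (line_dirs (Suc r) n x)"
      using matvec_image_line_dirs[OF A _ x] matvec_image_cspan by simp
    moreover have "cspan (line_dirs (Suc r) n x) \<subseteq> cvecs n"
      by (rule cspan_subset_cvecs[OF line_dirs_subset_cvecs[OF x]])
    ultimately show ?thesis
      unfolding spanning_def
      using bij_betw_covered_by_image_iff[OF linear_automorphism_bij_cvecs[OF A]] by simp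
  qed
  then have "bij_betw ?f {x \<in> ?V. spanning x} {x \<in> ?V. spanning x}"
    using A unfolding linear_automorphism_def by (blast intro: bij_betw_restrict_invariant)
  moreover have "Mvar r n = {x \<in> ?V. spanning x}"
    using mem_Mvar_iff_line_dirs_span[OF n] Mvar_mono[of r "Suc r" n]
    unfolding spanning_def by auto
  ultimately show ?thesis
    using A unfolding linear_automorphism_def by simp
qed

theorem lemma3p8:
  fixes d n :: nat and A :: "(nat \<times> nat) \<Rightarrow> (nat \<times> nat) \<Rightarrow> complex"
  assumes "d \<ge> 1" and "n \<ge> d + 2"
    and "linear_automorphism n A (Mvar d n)"
  shows "linear_automorphism n A (Mvar 1 n)"
  using assms
proof (induction d)
  case 0
  then show ?case by simp
next
  case (Suc r)
  show ?case
  proof (cases "r = 0")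
    case True
    with Suc.prems show ?thesis by simp
  next
    case False
    with Suc.prems linear_automorphism_Mvar_down[of n A r] have "linear_automorphism n A (Mvar r n)"
      by simp
    with Suc.IH Suc.prems False show ?thesis by simp
  qed
qed

end
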